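(* Let $\mathcal I,\mathcal O\subset\{1,\dots,K\}$ be disjoint sets of local populations, and let $T>0$ and a partition function $\Theta$ be fixed. Then the degeneracy and complexity satisfy $$\mathcal D_{T,\zeta}(\mathcal I:\mathcal O)\le\mathcal C_{T,\zeta}(\mathcal I:\mathcal O).$$
   Context: Setting: a spiking neuronal network with $K$ local populations whose state evolves as a continuous-time Markov process $X_t$ with unique invariant probability distribution $\pi$; $S_{[0,T)}$ is the random spike train of the network on $[0,T)$ (the finite list of spikes $(t_l,\xi_l)$, $l=1,\dots,Z$, with spike time $t_l$ and spiking neuron $\xi_l$) when $X_0\sim\pi$, and each neuron $\xi$ belongs to a local population $k(\xi)\in\{1,\dots,K\}$. Fix a partition function $\Theta:\mathbb{Z}_{\ge0}\to\{1,\dots,d\}$. For a set $C=\{C_1,\dots,C_{|C|}\}\subset\{1,\dots,K\}$ (with a fixed ordering), define $$\zeta_C(S_{[0,T)})=\sum_{n=1}^{|C|}d^{\,n-1}\,\Theta\Big(\sum_{l=1}^Z\mathbf{1}_{\{k(\xi_l)=C_n\}}\Big),$$ an injective encoding of the vector of coarse-grained spike counts of the populations in $C$; for $C=\emptyset$, $\zeta_\emptyset$ is constant. The coarse-grained entropy is $H_{T,\zeta_C}=-\sum_i p_i\log p_i$ with $p_i=\mathbb{P}_\pi[\zeta_C(S_{[0,T)})=i]$. For disjoint $A,B$, $MI_{T,\zeta}(A:B)=H_{T,\zeta_A}+H_{T,\zeta_B}-H_{T,\zeta_{A\cup B}}$, and for pairwise disjoint $A,B,C$, $$MI_{T,\zeta}(A:B:C)=H_{T,\zeta_A}+H_{T,\zeta_B}+H_{T,\zeta_C}-H_{T,\zeta_{A\cup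 B}}-H_{T,\zeta_{B\cup C}}-H_{T,\zeta_{A\cup C}}+H_{T,\zeta_{A\cup B\cup C}}.$$ Degeneracy and complexity: with the sum over $k=0,\dots,|\mathcal I|$ and over all subsets $\mathcal I_k\subseteq\mathcal I$ of cardinality $k$, and $\mathcal I_k^c=\mathcal I\setminus\mathcal I_k$, $$\mathcal D_{T,\zeta}(\mathcal I:\mathcal O)=\sum_{k=0}^{|\mathcal I|}\frac{1}{2\binom{|\mathcal I|}{k}}\sum_{\mathcal I_k}MI_{T,\zeta}(\mathcal I_k:\mathcal I_k^c:\mathcal O),\qquad \mathcal C_{T,\zeta}(\mathcal I:\mathcal O)=\sum_{k=0}^{|\mathcal I|}\frac{1}{2\binom{|\mathcal I|}{k}}\sum_{\mathcal I_k}MI_{T,\zeta}(\mathcal I_k:\mathcal I_k^c).$$ *)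

theory Defs
  imports "HOL-Probability.Probability"
begin

text \<open>A spike train on [0,T) is a finite list of spikes (t_l, xi_l).
  kpop assigns to each neuron its local population.\<close>

type_synonym 'n spike_train = "(real \<times> 'n) list"

definition pop_count :: "('n \<Rightarrow> nat) \<Rightarrow> nat \<Rightarrow> 'n spike_train \<Rightarrow> nat" where
  "pop_count kpop c s = length (filter (\<lambda>(t, \<xi>). kpop \<xi> = c) s)"

text \<open>zeta_C with the fixed ordering of C given by sorted_list_of_set;
  index n here runs over 0..|C|-1 (paper: n = 1..|C| with d^(n-1)).\<close>
definition zeta :: "nat \<Rightarrow> (nat \<Rightarrow> nat) \<Rightarrow> ('n \<Rightarrow> nat) \<Rightarrow> nat set \<Rightarrow> 'n spike_train \<Rightarrow> nat" where
  "zeta d \<Theta> kpop C s =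
     (\<Sum>n<card C. d ^ n * \<Theta> (pop_count kpop (sorted_list_of_set C ! n) s))"

definition cg_entropy ::
  "'a measure \<Rightarrow> ('a \<Rightarrow> 'n spike_train) \<Rightarrow> nat \<Rightarrow> (nat \<Rightarrow> nat) \<Rightarrow> ('n \<Rightarrow> nat) \<Rightarrow> nat set \<Rightarrow> real" where
  "cg_entropy M S d \<Theta> kpop C =
     - (\<Sum>i \<in> (\<lambda>\<omega>. zeta d \<Theta> kpop C (S \<omega>)) ` space M.
          measure M {\<omega> \<in> space M. zeta d \<Theta> kpop C (S \<omega>) = i}
          * ln (measure M {\<omega> \<in> space M. zeta d \<Theta> kpop C (S \<omega>) = i}))"

definition MI2 :: "(nat set \<Rightarrow> real) \<Rightarrow> nat set \<Rightarrow> nat set \<Rightarrow> real" where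
  "MI2 H A B = H A + H B - H (A \<union> B)"

definition MI3 :: "(nat set \<Rightarrow> real) \<Rightarrow> nat set \<Rightarrow> nat set \<Rightarrow> nat set \<Rightarrow> real" where
  "MI3 H A B C = H A + H B + H C - H (A \<union> B) - H (B \<union> C) - H (A \<union> C) + H (A \<union> B \<union> C)"

definition degeneracy :: "(nat set \<Rightarrow> real) \<Rightarrow> nat set \<Rightarrow> nat set \<Rightarrow> real" where
  "degeneracy H I Out =
     (\<Sum>k = 0..card I. 1 / (2 * real (card I choose k)) *
        (\<Sum>Ik \<in> {J. J \<subseteq> I \<and> card J = k}. MI3 H Ik (I - Ik) Out))"

definition complexity :: "(nat set \<Rightarrow> real) \<Rightarrow> nat set \<Rightarrow> nat set \<Rightarrow> real" where
  "complexity H I Out =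
     (\<Sum>k = 0..card I. 1 / (2 * real (card I choose k)) *
        (\<Sum>Ik \<in> {J. J \<subseteq> I \<and> card J = k}. MI2 H Ik (I - Ik)))"

end

theory Submission
  imports Defs
begin

(* zeta_C is a numeral in bijective base d (digits 1..d) for the vector of coarse-grained
   counts (Theta(N_c))_{c in C}; being injective on such vectors, it has the same entropy as the
   vector itself. For restrictions of one random vector, Shannon entropy is submodular,
     H(C) + H(A u B u C) <= H(A u C) + H(B u C),
   which is the nonnegativity of the conditional mutual information I(X_A; X_B | X_C). This
   inequality is exactly MI(A:B:C) <= MI(A:B); with A = I_k, B = I_k^c, C = O it holds term by term
   in the sums defining D and C, whose weights are nonnegative. *)

lemma (in prob_space) sum_prob_vimage_comp:
  assumes X: "simple_function M X"
  shows "(\<Sum>x\<in>X ` space M. prob (X -` {x} \<inter> space M) * g (f x))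
       = (\<Sum>y\<in>(f \<circ> X) ` space M. prob ((f \<circ> X) -` {y} \<inter> space M) * g y)"
proof -
  have fin: "finite (X ` space M)" and ev: "\<And>x. X -` {x} \<inter> space M \<in> events"
    using X by (auto simp: simple_functionD)
  have "prob ((f \<circ> X) -` {y} \<inter> space M) = (\<Sum>x\<in>{x\<in>X ` space M. f x = y}. prob (X -` {x} \<inter> space M))"
    for y
  proof -
    have "(f \<circ> X) -` {y} \<inter> space M = (\<Union>x\<in>{x\<in>X ` space M. f x = y}. X -` {x} \<inter> space M)"
      by auto
    then show ?thesis
      by (simp only:) (rule finite_measure_finite_Union, use fin ev in \<open>auto simp: disjoint_family_on_def\<close>)
  qed
  moreover have "(f \<circ> X) ` space M = f ` X ` space M"
    by auto
  ultimately have "(\<Sum>y\<in>(f \<circ> X) ` space M. prob ((f \<circ> X) -` {y} \<inter> space M) * g y)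
      = (\<Sum>y\<in>f ` X ` space M. \<Sum>x\<in>{x\<in>X ` space M. f x = y}. prob (X -` {x} \<inter> space M) * g (f x))"
    by (simp add: sum_distrib_right)
  also have "\<dots> = (\<Sum>x\<in>X ` space M. prob (X -` {x} \<inter> space M) * g (f x))"
    using fin by (intro sum.group) auto
  finally show ?thesis ..
qed

lemma (in information_space) entropy_simple_function:
  "simple_function M X \<Longrightarrow> \<H>(X) = - (\<Sum>x\<in>X ` space M. prob (X -` {x} \<inter> space M) * log b (prob (X -` {x} \<inter> space M)))"
  by (rule entropy_simple_distributed[OF simple_distributedI[OF _ measure_nonneg refl]])

lemma (in information_space) cross_entropy_marginal:
  assumes "simple_function M X"
  shows "(\<Sum>x\<in>X ` space M. prob (X -` {x} \<inter> space M) * log b (prob ((f \<circ> X) -` {f x} \<inter> space M)))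
       = - \<H>(f \<circ> X)"
  using sum_prob_vimage_comp[OF assms, of "\<lambda>y. log b (prob ((f \<circ> X) -` {y} \<inter> space M))" f]
    entropy_simple_function[OF simple_function_compose[OF assms, of f]]
  by simp

lemma (in prob_space) prob_vimage_le_comp:
  assumes "simple_function M (f \<circ> X)"
  shows "prob (X -` {x} \<inter> space M) \<le> prob ((f \<circ> X) -` {f x} \<inter> space M)"
  using assms by (intro finite_measure_mono) (auto simp: simple_functionD)

lemma (in information_space) entropy_submodular:
  fixes X :: "'a \<Rightarrow> 'x" and Y :: "'a \<Rightarrow> 'y" and Z :: "'a \<Rightarrow> 'z"
  assumes X: "simple_function M X" and Y: "simple_function M Y" and Z: "simple_function M Z"
  shows "\<H>(Z) + \<H>(\<lambda>\<omega>. (X \<omega>, Y \<omega>, Z \<omega>)) \<le> \<H>(\<lambda>\<omega>. (X \<omega>, Z \<omega>)) + \<H>(\<lambda>\<omega>. (Y \<omega>, Z \<omega>))"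
proof -
  let ?XZ = "\<lambda>\<omega>. (X \<omega>, Z \<omega>)" and ?YZ = "\<lambda>\<omega>. (Y \<omega>, Z \<omega>)"
  let ?XYZ = "\<lambda>\<omega>. (X \<omega>, Y \<omega>, Z \<omega>)"
  define xz :: "'x \<times> 'y \<times> 'z \<Rightarrow> 'x \<times> 'z" where "xz = (\<lambda>(x, y, z). (x, z))"
  define yz :: "'x \<times> 'y \<times> 'z \<Rightarrow> 'y \<times> 'z" where "yz = snd"
  define z :: "'x \<times> 'y \<times> 'z \<Rightarrow> 'z" where "z = snd \<circ> snd"
  have comp: "xz \<circ> ?XYZ = ?XZ" "yz \<circ> ?XYZ = ?YZ" "z \<circ> ?XYZ = Z"
    by (auto simp: xz_def yz_def z_def)
  have XYZ: "simple_function M ?XYZ" and XZ: "simple_function M ?XZ" and YZ: "simple_function M ?YZ"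
    using X Y Z by (auto intro: simple_function_Pair)
  define pxyz where "pxyz v = prob (?XYZ -` {v} \<inter> space M)" for v
  define pxz where "pxz v = prob (?XZ -` {v} \<inter> space M)" for v
  define pyz where "pyz v = prob (?YZ -` {v} \<inter> space M)" for v
  define pz where "pz v = prob (Z -` {v} \<inter> space M)" for v
  note sd = simple_distributedI[OF _ measure_nonneg refl]
  have "0 \<le> \<I>(X ; Y | Z)"
    using X Y Z by (rule conditional_mutual_information_nonneg)
  also have "\<I>(X ; Y | Z) = (\<Sum>v\<in>?XYZ ` space M.
      pxyz v * log b (pxyz v / (pxz (xz v) * (pyz (yz v) / pz (z v)))))"
    unfolding conditional_mutual_information_eq[OF sd[OF Z] sd[OF YZ] sd[OF XZ] sd[OF XYZ]]
    by (simp add: pxyz_def pxz_def pyz_def pz_def xz_def yz_def z_def split_beta')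
  also have "\<dots> = (\<Sum>v\<in>?XYZ ` space M. pxyz v * log b (pxyz v) - pxyz v * log b (pxz (xz v))
      - pxyz v * log b (pyz (yz v)) + pxyz v * log b (pz (z v)))"
  proof (rule sum.cong[OF refl])
    fix v
    have "0 \<le> pxyz v"
      by (simp add: pxyz_def)
    moreover have "pxyz v \<le> pxz (xz v)" "pxyz v \<le> pyz (yz v)" "pxyz v \<le> pz (z v)"
      using prob_vimage_le_comp[of xz ?XYZ v] prob_vimage_le_comp[of yz ?XYZ v]
        prob_vimage_le_comp[of z ?XYZ v] XZ YZ Z
      unfolding comp pxyz_def pxz_def pyz_def pz_def by auto
    ultimately show "pxyz v * log b (pxyz v / (pxz (xz v) * (pyz (yz v) / pz (z v))))
      = pxyz v * log b (pxyz v) - pxyz v * log b (pxz (xz v))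
        - pxyz v * log b (pyz (yz v)) + pxyz v * log b (pz (z v))"
      by (cases "pxyz v = 0") (auto simp: log_divide log_mult algebra_simps)
  qed
  also have "\<dots> = - \<H>(?XYZ) + \<H>(?XZ) + \<H>(?YZ) - \<H>(Z)"
    using entropy_simple_function[OF XYZ] cross_entropy_marginal[OF XYZ, of xz]
      cross_entropy_marginal[OF XYZ, of yz] cross_entropy_marginal[OF XYZ, of z]
    unfolding comp pxyz_def pxz_def pyz_def pz_def
    by (simp add: sum.distrib sum_subtractf)
  finally show ?thesis
    by simp
qed

lemma inj_on_restrict_pair: "inj_on (\<lambda>h. (restrict h A, restrict h B)) (extensional (A \<union> B))"
proof (rule inj_onI)
  fix g h assume g: "g \<in> extensional (A \<union> B)" and h: "h \<in> extensional (A \<union> B)"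
    and "(restrict g A, restrict g B) = (restrict h A, restrict h B)"
  then have "restrict g A x = restrict h A x" "restrict g B x = restrict h B x" for x
    by simp_all
  then show "g = h"
    by (intro extensionalityI[OF g h]) (metis Un_iff restrict_apply')
qed

lemma inj_on_restrict_triple:
  "inj_on (\<lambda>h. (restrict h A, restrict h B, restrict h C)) (extensional (A \<union> B \<union> C))"
proof (rule inj_onI)
  fix g h assume g: "g \<in> extensional (A \<union> B \<union> C)" and h: "h \<in> extensional (A \<union> B \<union> C)"
    and "(restrict g A, restrict g B, restrict g C) = (restrict h A, restrict h B, restrict h C)"
  then have "restrict g A x = restrict h A x" "restrict g B x = restrict h B x" "restrict g C x = restrict h C x" for x
    by simp_all
  then show "g = h"
    by (intro extensionalityI[OF g h]) (metis Un_iff restrict_apply')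
qed

lemma (in information_space) entropy_restrict_pair:
  assumes "simple_function M V"
  shows "\<H>(\<lambda>\<omega>. (restrict (V \<omega>) A, restrict (V \<omega>) B)) = \<H>(\<lambda>\<omega>. restrict (V \<omega>) (A \<union> B))"
proof -
  have "\<H>((\<lambda>h. (restrict h A, restrict h B)) \<circ> (\<lambda>\<omega>. restrict (V \<omega>) (A \<union> B)))
      = \<H>(\<lambda>\<omega>. restrict (V \<omega>) (A \<union> B))"
    by (rule entropy_of_inj[OF simple_function_compose1[OF assms]])
      (rule inj_on_subset[OF inj_on_restrict_pair], blast)
  then show ?thesis
    by (simp add: comp_def Int_absorb2)
qed

lemma (in information_space) entropy_restrict_triple:
  assumes "simple_function M V"
  shows "\<H>(\<lambda>\<omega>. (restrict (V \<omega>) A, restrict (V \<omega>) B, restrict (V \<omega>) C))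
       = \<H>(\<lambda>\<omega>. restrict (V \<omega>) (A \<union> B \<union> C))"
proof -
  have "\<H>((\<lambda>h. (restrict h A, restrict h B, restrict h C)) \<circ> (\<lambda>\<omega>. restrict (V \<omega>) (A \<union> B \<union> C)))
      = \<H>(\<lambda>\<omega>. restrict (V \<omega>) (A \<union> B \<union> C))"
    by (rule entropy_of_inj[OF simple_function_compose1[OF assms]])
      (rule inj_on_subset[OF inj_on_restrict_triple], blast)
  moreover have "(A \<union> B \<union> C) \<inter> A = A" "(A \<union> B \<union> C) \<inter> B = B" "(A \<union> B \<union> C) \<inter> C = C"
    by auto
  ultimately show ?thesis
    by (simp add: comp_def)
qed

lemma (in information_space) entropy_restrict_submodular:
  assumes "simple_function M V"
  shows "\<H>(\<lambda>\<omega>. restrict (V \<omega>) C) + \<H>(\<lambda>\<omega>. restrict (V \<omega>) (A \<union> B \<union> C))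
       \<le> \<H>(\<lambda>\<omega>. restrict (V \<omega>) (A \<union> C)) + \<H>(\<lambda>\<omega>. restrict (V \<omega>) (B \<union> C))"
  using entropy_submodular[OF simple_function_compose1[OF assms, of "\<lambda>h. restrict h A"]
      simple_function_compose1[OF assms, of "\<lambda>h. restrict h B"]
      simple_function_compose1[OF assms, of "\<lambda>h. restrict h C"]]
  unfolding entropy_restrict_pair[OF assms] entropy_restrict_triple[OF assms] .

lemma base_digits_unique:
  fixes a a' :: "nat \<Rightarrow> nat"
  assumes "\<forall>n<m. a n < d" and "\<forall>n<m. a' n < d"
    and "(\<Sum>n<m. d ^ n * a n) = (\<Sum>n<m. d ^ n * a' n)"
  shows "\<forall>n<m. a n = a' n"
  using assms
proof (induction m arbitrary: a a')
  case 0
  then show ?case by simp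
next
  case (Suc m)
  have shift: "(\<Sum>n<Suc m. d ^ n * f n) = f 0 + d * (\<Sum>n<m. d ^ n * f (Suc n))" for f :: "nat \<Rightarrow> nat"
    by (simp only: sum.lessThan_Suc_shift power_Suc power_0 mult_1 mult.assoc sum_distrib_left)
  have "a 0 < d" "a' 0 < d"
    using Suc.prems by auto
  have eq: "a 0 + d * (\<Sum>n<m. d ^ n * a (Suc n)) = a' 0 + d * (\<Sum>n<m. d ^ n * a' (Suc n))"
    using Suc.prems(3) unfolding shift .
  then have "(a 0 + d * (\<Sum>n<m. d ^ n * a (Suc n))) mod d = (a' 0 + d * (\<Sum>n<m. d ^ n * a' (Suc n))) mod d"
    by simp
  then have "a 0 = a' 0"
    using \<open>a 0 < d\<close> \<open>a' 0 < d\<close> by simp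
  with eq have tail: "(\<Sum>n<m. d ^ n * a (Suc n)) = (\<Sum>n<m. d ^ n * a' (Suc n))"
    using \<open>a 0 < d\<close> by simp
  have "\<forall>n<m. a (Suc n) < d" "\<forall>n<m. a' (Suc n) < d"
    using Suc.prems(1,2) by auto
  then have "\<forall>n<m. a (Suc n) = a' (Suc n)"
    using tail by (rule Suc.IH)
  with \<open>a 0 = a' 0\<close> show ?case
    by (auto simp: less_Suc_eq_0_disj)
qed

lemma bijective_base_digits_unique:
  fixes a a' :: "nat \<Rightarrow> nat"
  assumes "\<forall>n<m. a n \<in> {1..d}" and "\<forall>n<m. a' n \<in> {1..d}"
    and "(\<Sum>n<m. d ^ n * a n) = (\<Sum>n<m. d ^ n * a' n)"
  shows "\<forall>n<m. a n = a' n"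
proof -
  have shift: "(\<Sum>n<m. d ^ n * f n) = (\<Sum>n<m. d ^ n * (f n - 1)) + (\<Sum>n<m. d ^ n)"
    if "\<forall>n<m. f n \<in> {1..d}" for f
  proof -
    have "d ^ n * f n = d ^ n * (f n - 1) + d ^ n" if "1 \<le> f n" for n
      using le_add_diff_inverse2[OF that] by (metis distrib_left mult.right_neutral)
    with that show ?thesis
      by (simp add: sum.distrib[symmetric])
  qed
  have "(\<Sum>n<m. d ^ n * (a n - 1)) = (\<Sum>n<m. d ^ n * (a' n - 1))"
    using assms(3) shift[OF assms(1)] shift[OF assms(2)] by linarith
  then have "\<forall>n<m. a n - 1 = a' n - 1"
    using assms(1,2) by (intro base_digits_unique) auto
  show ?thesis
  proof (intro allI impI)
    fix n assume "n < m"
    then have "a n - 1 = a' n - 1" "1 \<le> a n" "1 \<le> a' n"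
      using \<open>\<forall>n<m. a n - 1 = a' n - 1\<close> assms(1,2) by auto
    then show "a n = a' n"
      by linarith
  qed
qed

lemma inj_on_bijective_base_encoding:
  fixes d :: nat
  assumes "finite C"
  shows "inj_on (\<lambda>v. \<Sum>n<card C. d ^ n * v (sorted_list_of_set C ! n)) (\<Pi>\<^sub>E c\<in>C. {1..d})"
proof (rule inj_onI)
  let ?c = "\<lambda>n. sorted_list_of_set C ! n"
  fix v w assume v: "v \<in> (\<Pi>\<^sub>E c\<in>C. {1..d})" and w: "w \<in> (\<Pi>\<^sub>E c\<in>C. {1..d})"
    and eq: "(\<Sum>n<card C. d ^ n * v (?c n)) = (\<Sum>n<card C. d ^ n * w (?c n))"
  have c_in_C: "?c n \<in> C" if "n < card C" for n
    using assms that nth_mem[of n "sorted_list_of_set C"] by simp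
  have "\<forall>n<card C. v (?c n) \<in> {1..d}" "\<forall>n<card C. w (?c n) \<in> {1..d}"
    using v w c_in_C by (auto simp: PiE_iff)
  then have "\<forall>n<card C. v (?c n) = w (?c n)"
    using eq by (rule bijective_base_digits_unique)
  then have "\<forall>c\<in>C. v c = w c"
    using assms by (metis in_set_conv_nth sorted_list_of_set.length_sorted_key_list_of_set
        sorted_list_of_set.set_sorted_key_list_of_set)
  with v w show "v = w"
    by (auto intro: PiE_ext)
qed

definition cg_counts :: "(nat \<Rightarrow> nat) \<Rightarrow> ('n \<Rightarrow> nat) \<Rightarrow> ('a \<Rightarrow> 'n spike_train) \<Rightarrow> nat set \<Rightarrow> 'a \<Rightarrow> nat \<Rightarrow> nat"
  where "cg_counts \<Theta> kpop S C \<omega> = restrict (\<lambda>c. \<Theta> (pop_count kpop c (S \<omega>))) C"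

lemma restrict_cg_counts: "D \<subseteq> C \<Longrightarrow> restrict (cg_counts \<Theta> kpop S C \<omega>) D = cg_counts \<Theta> kpop S D \<omega>"
  by (simp add: cg_counts_def Int_absorb1)

lemma cg_counts_in_PiE: "\<forall>n. \<Theta> n \<in> {1..d} \<Longrightarrow> cg_counts \<Theta> kpop S C \<omega> \<in> (\<Pi>\<^sub>E c\<in>C. {1..d})"
  by (simp add: cg_counts_def)

lemma simple_function_cg_counts:
  assumes \<Theta>: "\<forall>n. \<Theta> n \<in> {1..d}"
    and meas: "\<forall>c. (\<lambda>\<omega>. pop_count kpop c (S \<omega>)) \<in> measurable M (count_space UNIV)"
    and "finite C"
  shows "simple_function M (cg_counts \<Theta> kpop S C)"
  using \<open>finite C\<close>
proof induction
  case empty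
  then show ?case
    by (simp add: cg_counts_def)
next
  case (insert c C)
  have "simple_function M (\<lambda>\<omega>. \<Theta> (pop_count kpop c (S \<omega>)))"
    unfolding simple_function_eq_measurable
    using \<Theta> meas by (auto intro: finite_subset[of _ "{1..d}"] measurable_compose)
  then have "simple_function M (\<lambda>\<omega>. (cg_counts \<Theta> kpop S C \<omega>)(c := \<Theta> (pop_count kpop c (S \<omega>))))"
    by (rule simple_function_compose2[OF insert.IH, where h = "\<lambda>v y. v(c := y)"])
  moreover have "cg_counts \<Theta> kpop S (insert c C)
      = (\<lambda>\<omega>. (cg_counts \<Theta> kpop S C \<omega>)(c := \<Theta> (pop_count kpop c (S \<omega>))))"
    by (auto simp: cg_counts_def fun_eq_iff)
  ultimately show ?case
    by (simp only:)
qed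

lemma (in information_space) cg_entropy_eq_entropy:
  assumes \<Theta>: "\<forall>n. \<Theta> n \<in> {1..d}"
    and meas: "\<forall>c. (\<lambda>\<omega>. pop_count kpop c (S \<omega>)) \<in> measurable M (count_space UNIV)"
    and "finite C"
  shows "cg_entropy M S d \<Theta> kpop C = ln b * \<H>(cg_counts \<Theta> kpop S C)"
proof -
  let ?V = "cg_counts \<Theta> kpop S C" and ?c = "\<lambda>n. sorted_list_of_set C ! n"
  define enc where "enc v = (\<Sum>n<card C. d ^ n * v (?c n))" for v :: "nat \<Rightarrow> nat"
  have c_in_C: "?c n \<in> C" if "n < card C" for n
    using \<open>finite C\<close> that nth_mem[of n "sorted_list_of_set C"] by simp
  have zeta: "zeta d \<Theta> kpop C (S \<omega>) = (enc \<circ> ?V) \<omega>" for \<omega>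
    by (auto simp: zeta_def enc_def cg_counts_def c_in_C intro!: sum.cong)
  have inj: "inj_on enc (\<Pi>\<^sub>E c\<in>C. {1..d})"
    unfolding enc_def using \<open>finite C\<close> by (rule inj_on_bijective_base_encoding)
  have V: "simple_function M ?V"
    using \<Theta> meas \<open>finite C\<close> by (rule simple_function_cg_counts)
  have "cg_entropy M S d \<Theta> kpop C = - (\<Sum>x\<in>(enc \<circ> ?V) ` space M.
      prob ((enc \<circ> ?V) -` {x} \<inter> space M) * ln (prob ((enc \<circ> ?V) -` {x} \<inter> space M)))"
    by (simp add: cg_entropy_def zeta vimage_def Int_def conj_commute)
  also have "\<dots> = ln b * - (\<Sum>x\<in>(enc \<circ> ?V) ` space M.
      prob ((enc \<circ> ?V) -` {x} \<inter> space M) * log b (prob ((enc \<circ> ?V) -` {x} \<inter> space M)))"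
    using b_gt_1 by (simp add: log_def sum_distrib_left)
  also have "\<dots> = ln b * \<H>(enc \<circ> ?V)"
    using entropy_simple_function[OF simple_function_compose[OF V, of enc]] by simp
  also have "\<H>(enc \<circ> ?V) = \<H>(?V)"
    using V inj_on_subset[OF inj image_subsetI[OF cg_counts_in_PiE[OF \<Theta>]]] by (rule entropy_of_inj)
  finally show ?thesis .
qed

lemma (in information_space) cg_entropy_submodular:
  assumes \<Theta>: "\<forall>n. \<Theta> n \<in> {1..d}"
    and meas: "\<forall>c. (\<lambda>\<omega>. pop_count kpop c (S \<omega>)) \<in> measurable M (count_space UNIV)"
    and fin: "finite A" "finite B" "finite C"
  shows "cg_entropy M S d \<Theta> kpop C + cg_entropy M S d \<Theta> kpop (A \<union> B \<union> C)
       \<le> cg_entropy M S d \<Theta> kpop (A \<union> C) + cg_entropy M S d \<Theta> kpop (B \<union> C)"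
proof -
  let ?U = "A \<union> B \<union> C"
  have "simple_function M (cg_counts \<Theta> kpop S ?U)"
    using \<Theta> meas by (rule simple_function_cg_counts) (use fin in simp)
  moreover have "C \<subseteq> ?U" "A \<union> C \<subseteq> ?U" "B \<union> C \<subseteq> ?U"
    by auto
  ultimately have "\<H>(cg_counts \<Theta> kpop S C) + \<H>(cg_counts \<Theta> kpop S ?U)
      \<le> \<H>(cg_counts \<Theta> kpop S (A \<union> C)) + \<H>(cg_counts \<Theta> kpop S (B \<union> C))"
    using entropy_restrict_submodular[of "cg_counts \<Theta> kpop S ?U" C A B]
    by (simp only: restrict_cg_counts subset_refl)
  with b_gt_1 show ?thesis
    using fin by (simp add: cg_entropy_eq_entropy[OF \<Theta> meas] distrib_left[symmetric])
qed

lemma MI3_le_MI2: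
  assumes "H C + H (A \<union> B \<union> C) \<le> H (A \<union> C) + H (B \<union> C)"
  shows "MI3 H A B C \<le> MI2 H A B"
  using assms unfolding MI3_def MI2_def by linarith

lemma degeneracy_le_complexity:
  assumes "\<And>A B. A \<subseteq> I \<Longrightarrow> B \<subseteq> I \<Longrightarrow> H Out + H (A \<union> B \<union> Out) \<le> H (A \<union> Out) + H (B \<union> Out)"
  shows "degeneracy H I Out \<le> complexity H I Out"
  unfolding degeneracy_def complexity_def
  by (intro sum_mono mult_left_mono MI3_le_MI2 assms) auto

theorem theorem5p3:
  fixes M :: "'a measure"
    and S :: "'a \<Rightarrow> 'n spike_train"
    and kpop :: "'n \<Rightarrow> nat"
    and \<Theta> :: "nat \<Rightarrow> nat"
    and K d :: nat and T :: real
    and I Out :: "nat set"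
  assumes "prob_space M"
    and "T > 0"
    and "\<forall>n. \<Theta> n \<in> {1..d}"
    and "\<forall>\<xi>. kpop \<xi> \<in> {1..K}"
    and "\<forall>\<omega> \<in> space M. \<forall>(t, \<xi>) \<in> set (S \<omega>). 0 \<le> t \<and> t < T"
    and "\<forall>c. (\<lambda>\<omega>. pop_count kpop c (S \<omega>)) \<in> measurable M (count_space UNIV)"
    and "I \<subseteq> {1..K}" and "Out \<subseteq> {1..K}" and "I \<inter> Out = {}"
  shows "degeneracy (cg_entropy M S d \<Theta> kpop) I Out
           \<le> complexity (cg_entropy M S d \<Theta> kpop) I Out"
proof -
  \<comment> \<open>Only the range of \<Theta> (injectivity of zeta) and measurability are used: the inequality
    holds for any random spike train, and I, Out need not be disjoint.\<close>
  interpret prob_space M by fact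
  interpret information_space M "exp 1" by standard simp
  have "finite I" "finite Out"
    using assms(7,8) by (auto intro: finite_subset)
  then show ?thesis
    by (intro degeneracy_le_complexity cg_entropy_submodular[OF assms(3,6)]) (auto intro: finite_subset)
qed

end
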